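(* Let $(a_0,\ldots,a_n)$ be a finite sequence of positive integers and $m\ge 1$ an integer. Then $\lim_{N\to\infty}\Phi(\beta^N)=\infty$.
   Context: For positive integers $d_0,d_1,\ldots$, $[d_0,d_1,d_2,\ldots]$ denotes the continued fraction $\cfrac{1}{d_0+\cfrac{1}{d_1+\cfrac{1}{d_2+\cdots}}}$, and for $\beta=[d_0,d_1,\ldots]$ we write $\alpha_j(\beta)=[d_j,d_{j+1},\ldots]$. $\Phi(\beta)=\sum_{k\ge 0}\alpha_0(\beta)\cdots\alpha_{k-1}(\beta)\log\frac{1}{\alpha_k(\beta)}$ is the Yoccoz Brjuno function. For $N\ge1$, $\beta^N$ is the number whose digits (indexed from $0$) are $a_0,\ldots,a_n$ in positions $0,\ldots,n$, $N$ in position $n+m$, and $1$ in all other positions. *)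

theory Defs
  imports "HOL-Analysis.Analysis"
begin

fun cf_fin :: "(nat \<Rightarrow> nat) \<Rightarrow> nat \<Rightarrow> real" where
  "cf_fin d 0 = 0"
| "cf_fin d (Suc k) = 1 / (real (d 0) + cf_fin (\<lambda>i. d (Suc i)) k)"

definition cf :: "(nat \<Rightarrow> nat) \<Rightarrow> real" where
  "cf d = lim (\<lambda>k. cf_fin d k)"

definition cf_alpha :: "nat \<Rightarrow> (nat \<Rightarrow> nat) \<Rightarrow> real" where
  "cf_alpha j d = cf (\<lambda>i. d (i + j))"

definition brjuno :: "(nat \<Rightarrow> nat) \<Rightarrow> real" where
  "brjuno d = (\<Sum>k. (\<Prod>j<k. cf_alpha j d) * ln (1 / cf_alpha k d))"

text \<open>Digits of beta^N: a_i at positions 0..n, N at position n+m, 1 elsewhere.\<close>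
definition beta_digits :: "(nat \<Rightarrow> nat) \<Rightarrow> nat \<Rightarrow> nat \<Rightarrow> nat \<Rightarrow> nat \<Rightarrow> nat" where
  "beta_digits a n m N i = (if i \<le> n then a i else if i = n + m then N else 1)"

end

theory Submission
  imports Defs
begin

text \<open>
  When all digits are positive and equal to 1 from some position K on, every \<open>\<alpha>\<^sub>j\<close> exists,
  lies in (0,1] and satisfies \<open>\<alpha>\<^sub>j = 1/(d\<^sub>j + \<alpha>\<^sub>j\<^sub>+\<^sub>1)\<close>; for \<open>j \<ge> K\<close> it is the inverse golden
  ratio. So the Brjuno series has nonnegative terms and a geometric tail, and \<open>\<Phi>\<close> dominates
  its k-th term, which is at least \<open>\<Prod>\<^sub>j\<^sub><\<^sub>k 1/(d\<^sub>j + 1) \<cdot> ln d\<^sub>k\<close>. For \<open>\<beta>\<^sup>N\<close> and k = n + m the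
  product does not depend on N while \<open>d\<^sub>k = N\<close>, hence \<open>\<Phi>(\<beta>\<^sup>N) \<ge> C ln N\<close> with C > 0.
\<close>

lemma cf_fin_nonneg: "cf_fin d k \<ge> 0"
  by (induction k arbitrary: d) auto

definition inv_golden_ratio :: real where
  "inv_golden_ratio = (sqrt 5 - 1) / 2"

lemma inv_golden_ratio_pos: "0 < inv_golden_ratio"
  and inv_golden_ratio_less_1: "inv_golden_ratio < 1"
proof -
  have "1 < sqrt 5" "sqrt 5 < 3"
    by (simp_all add: real_less_rsqrt real_less_lsqrt)
  then show "0 < inv_golden_ratio" "inv_golden_ratio < 1"
    unfolding inv_golden_ratio_def by auto
qed

lemma inv_golden_ratio_fixed_point: "1 / (1 + inv_golden_ratio) = inv_golden_ratio"
proof -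
  have "inv_golden_ratio * (1 + inv_golden_ratio) = 1"
    unfolding inv_golden_ratio_def by (simp add: field_simps)
  with inv_golden_ratio_pos show ?thesis
    by (simp add: field_simps)
qed

text \<open>The map \<open>x \<mapsto> 1/(1 + x)\<close> has the fixed point \<open>g = inv_golden_ratio\<close> and, for \<open>x \<ge> 0\<close>,
  shrinks the distance to it by the factor \<open>1/((1 + x)(1 + g)) \<le> g\<close>.\<close>

lemma cf_fin_ones_dist:
  "\<bar>cf_fin (\<lambda>_. 1) k - inv_golden_ratio\<bar> \<le> inv_golden_ratio ^ Suc k"
proof (induction k)
  case 0
  then show ?case
    using inv_golden_ratio_pos by simp
next
  case (Suc k)
  let ?g = inv_golden_ratio
  define x where "x = cf_fin (\<lambda>_. 1) k"
  have x: "x \<ge> 0"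
    unfolding x_def by (rule cf_fin_nonneg)
  have g: "?g > 0"
    by (rule inv_golden_ratio_pos)
  have "cf_fin (\<lambda>_. 1) (Suc k) - ?g = 1 / (1 + x) - 1 / (1 + ?g)"
    by (simp add: x_def inv_golden_ratio_fixed_point)
  also have "\<dots> = (?g - x) * (1 / (1 + x)) * (1 / (1 + ?g))"
    using x g by (simp add: field_simps)
  finally have "\<bar>cf_fin (\<lambda>_. 1) (Suc k) - ?g\<bar> = \<bar>x - ?g\<bar> * (1 / (1 + x)) * ?g"
    using x g by (simp add: abs_mult inv_golden_ratio_fixed_point)
  also have "\<dots> \<le> \<bar>x - ?g\<bar> * 1 * ?g"
    using x g by (intro mult_right_mono mult_left_mono) auto
  also have "\<dots> \<le> ?g ^ Suc k * ?g"
    using Suc g by (intro mult_right_mono) (auto simp: x_def)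
  finally show ?case
    by (simp add: mult.commute)
qed

lemma cf_fin_ones_tendsto: "cf_fin (\<lambda>_. 1) \<longlonglongrightarrow> inv_golden_ratio"
proof -
  have "\<forall>\<^sub>F k in sequentially.
      norm (cf_fin (\<lambda>_. 1) k - inv_golden_ratio) \<le> inv_golden_ratio ^ Suc k"
    by (simp only: real_norm_def cf_fin_ones_dist eventually_True)
  moreover have "(\<lambda>k. inv_golden_ratio ^ Suc k) \<longlonglongrightarrow> 0"
    using LIMSEQ_power_zero[of inv_golden_ratio] inv_golden_ratio_pos inv_golden_ratio_less_1
    by simp
  ultimately have "(\<lambda>k. cf_fin (\<lambda>_. 1) k - inv_golden_ratio) \<longlonglongrightarrow> 0"
    by (rule Lim_null_comparison)
  then show ?thesis
    by (simp add: LIM_zero_iff)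
qed

lemma cf_fin_tendsto_Cons:
  assumes "cf_fin (\<lambda>i. d (Suc i)) \<longlonglongrightarrow> L" and "L \<ge> 0" and "d 0 \<ge> 1"
  shows "cf_fin d \<longlonglongrightarrow> 1 / (real (d 0) + L)"
proof -
  have "(\<lambda>k. 1 / (real (d 0) + cf_fin (\<lambda>i. d (Suc i)) k)) \<longlonglongrightarrow> 1 / (real (d 0) + L)"
    using assms by (intro tendsto_intros) auto
  then show ?thesis
    by (simp flip: filterlim_sequentially_Suc[of "cf_fin d"])
qed

lemma cf_fin_tendsto_eventually_one:
  assumes "\<And>i. d i \<ge> 1" and "\<And>i. i \<ge> K \<Longrightarrow> d i = 1"
  shows "cf_fin d \<longlonglongrightarrow> cf d \<and> 0 < cf d \<and> cf d \<le> 1"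
  using assms
proof (induction K arbitrary: d)
  case 0
  then have "d = (\<lambda>_. 1)"
    by auto
  then show ?case
    using cf_fin_ones_tendsto inv_golden_ratio_pos inv_golden_ratio_less_1
    by (auto simp: cf_def limI)
next
  case (Suc K)
  then have tail: "cf_fin (\<lambda>i. d (Suc i)) \<longlonglongrightarrow> cf (\<lambda>i. d (Suc i))"
    and tail_pos: "0 < cf (\<lambda>i. d (Suc i))"
    by (metis Suc_le_mono)+
  have "cf_fin d \<longlonglongrightarrow> 1 / (real (d 0) + cf (\<lambda>i. d (Suc i)))"
    using cf_fin_tendsto_Cons[OF tail] tail_pos Suc.prems(1) by simp
  moreover have "1 \<le> real (d 0)"
    using Suc.prems(1) by simp
  ultimately show ?case
    using tail_pos by (auto simp: cf_def limI)
qed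

definition brjuno_term :: "(nat \<Rightarrow> nat) \<Rightarrow> nat \<Rightarrow> real" where
  "brjuno_term d k = (\<Prod>j<k. cf_alpha j d) * ln (1 / cf_alpha k d)"

lemma brjuno_eq_suminf: "brjuno d = suminf (brjuno_term d)"
  by (simp add: brjuno_def brjuno_term_def [abs_def])

locale eventually_one_digits =
  fixes d :: "nat \<Rightarrow> nat" and K :: nat
  assumes digit_pos: "d i \<ge> 1"
    and digit_tail: "i \<ge> K \<Longrightarrow> d i = 1"
begin

lemma cf_alpha_tendsto: "cf_fin (\<lambda>i. d (i + j)) \<longlonglongrightarrow> cf_alpha j d"
  and cf_alpha_pos: "0 < cf_alpha j d"
  and cf_alpha_le_1: "cf_alpha j d \<le> 1"
proof -
  have "cf_fin (\<lambda>i. d (i + j)) \<longlonglongrightarrow> cf_alpha j d \<and> 0 < cf_alpha j d \<and> cf_alpha j d \<le> 1"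
    unfolding cf_alpha_def using digit_pos digit_tail
    by (intro cf_fin_tendsto_eventually_one[of _ K]) auto
  then show "cf_fin (\<lambda>i. d (i + j)) \<longlonglongrightarrow> cf_alpha j d" "0 < cf_alpha j d" "cf_alpha j d \<le> 1"
    by auto
qed

lemma cf_alpha_Suc: "cf_alpha j d = 1 / (real (d j) + cf_alpha (Suc j) d)"
proof -
  have "cf_fin (\<lambda>i. (\<lambda>i. d (i + j)) (Suc i)) \<longlonglongrightarrow> cf_alpha (Suc j) d"
    using cf_alpha_tendsto[of "Suc j"] by simp
  from cf_fin_tendsto_Cons[OF this less_imp_le[OF cf_alpha_pos]]
  have "cf_fin (\<lambda>i. d (i + j)) \<longlonglongrightarrow> 1 / (real (d j) + cf_alpha (Suc j) d)"
    using digit_pos by simp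
  with cf_alpha_tendsto show ?thesis
    using LIMSEQ_unique by blast
qed

lemma cf_alpha_tail:
  assumes "j \<ge> K"
  shows "cf_alpha j d = inv_golden_ratio"
proof -
  have "(\<lambda>i. d (i + j)) = (\<lambda>_. 1)"
    using assms digit_tail by auto
  then have "cf_fin (\<lambda>i. d (i + j)) \<longlonglongrightarrow> inv_golden_ratio"
    using cf_fin_ones_tendsto by simp
  with cf_alpha_tendsto show ?thesis
    using LIMSEQ_unique by blast
qed

lemma cf_alpha_lower_bound: "1 / (real (d j) + 1) \<le> cf_alpha j d"
proof -
  have "1 / (real (d j) + 1) \<le> 1 / (real (d j) + cf_alpha (Suc j) d)"
    using cf_alpha_pos[of "Suc j"] cf_alpha_le_1[of "Suc j"] by (intro frac_le) auto
  then show ?thesis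
    by (simp only: cf_alpha_Suc[of j, symmetric])
qed

lemma ln_digit_le: "ln (real (d k)) \<le> ln (1 / cf_alpha k d)"
proof -
  have "1 / cf_alpha k d = real (d k) + cf_alpha (Suc k) d"
    using cf_alpha_pos[of k] by (subst cf_alpha_Suc) simp
  then show ?thesis
    using digit_pos[of k] cf_alpha_pos[of "Suc k"] by simp
qed

lemma brjuno_term_nonneg: "0 \<le> brjuno_term d k"
  unfolding brjuno_term_def using cf_alpha_pos cf_alpha_le_1
  by (intro mult_nonneg_nonneg prod_nonneg) (auto intro: less_imp_le)

lemma brjuno_term_tail:
  "brjuno_term d (k + K) = (\<Prod>j<K. cf_alpha j d) * ln (1 / inv_golden_ratio) * inv_golden_ratio ^ k"
proof -
  have "(\<Prod>j<k + K. cf_alpha j d) = (\<Prod>j<K. cf_alpha j d) * inv_golden_ratio ^ k"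
    by (induction k) (simp_all add: cf_alpha_tail)
  then show ?thesis
    unfolding brjuno_term_def by (simp add: cf_alpha_tail)
qed

lemma summable_brjuno_term: "summable (brjuno_term d)"
proof -
  have "summable (\<lambda>k. brjuno_term d (k + K))"
    unfolding brjuno_term_tail using inv_golden_ratio_pos inv_golden_ratio_less_1
    by (intro summable_mult summable_geometric) auto
  then show ?thesis
    by (rule summable_offset)
qed

lemma brjuno_term_le_brjuno: "brjuno_term d k \<le> brjuno d"
  using sum_le_suminf[OF summable_brjuno_term, of "{k}"] brjuno_term_nonneg
  by (simp add: brjuno_eq_suminf)

lemma brjuno_ge_ln_digit: "(\<Prod>j<k. 1 / (real (d j) + 1)) * ln (real (d k)) \<le> brjuno d"
proof -
  have "(\<Prod>j<k. 1 / (real (d j) + 1)) * ln (real (d k)) \<le> brjuno_term d k"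
    unfolding brjuno_term_def using digit_pos[of k] cf_alpha_pos
    by (intro mult_mono prod_mono prod_nonneg ln_digit_le cf_alpha_lower_bound conjI)
      (auto intro: less_imp_le)
  also have "\<dots> \<le> brjuno d"
    by (rule brjuno_term_le_brjuno)
  finally show ?thesis .
qed

end

lemma beta_digits_eventually_one:
  assumes "\<forall>i\<le>n. a i > 0" and "N \<ge> 1"
  shows "eventually_one_digits (beta_digits a n m N) (Suc (n + m))"
  using assms by unfold_locales (auto simp: beta_digits_def Suc_le_eq)

lemma beta_digits_independent_of_N:
  "j < n + m \<Longrightarrow> beta_digits a n m N j = beta_digits a n m N' j"
  by (simp add: beta_digits_def)

theorem mainTheorem10:
  fixes a :: "nat \<Rightarrow> nat" and n m :: nat
  assumes "\<forall>i\<le>n. a i > 0" and "m \<ge> 1"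
  shows "filterlim (\<lambda>N. brjuno (beta_digits a n m N)) at_top sequentially"
proof -
  define C where "C = (\<Prod>j<n + m. 1 / (real (beta_digits a n m 1 j) + 1))"
  have "C > 0"
    unfolding C_def by (intro prod_pos) auto
  then have "filterlim (\<lambda>N. C * ln (real N)) at_top sequentially"
    by (intro filterlim_tendsto_pos_mult_at_top[OF tendsto_const]
        filterlim_compose[OF ln_at_top filterlim_real_sequentially])
  moreover have "\<forall>\<^sub>F N in sequentially. C * ln (real N) \<le> brjuno (beta_digits a n m N)"
  proof (rule eventually_sequentiallyI)
    fix N :: nat
    assume "N \<ge> 1"
    interpret eventually_one_digits "beta_digits a n m N" "Suc (n + m)"
      using beta_digits_eventually_one[OF assms(1) \<open>N \<ge> 1\<close>] .
    have "C = (\<Prod>j<n + m. 1 / (real (beta_digits a n m N j) + 1))"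
      unfolding C_def by (intro prod.cong) (auto intro: beta_digits_independent_of_N)
    moreover have "beta_digits a n m N (n + m) = N"
      using assms(2) by (simp add: beta_digits_def)
    ultimately show "C * ln (real N) \<le> brjuno (beta_digits a n m N)"
      using brjuno_ge_ln_digit[of "n + m"] by simp
  qed
  ultimately show ?thesis
    by (rule filterlim_at_top_mono)
qed

end
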